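(* Let $a\ge 1$ be an integer and let $S\subseteq\mathbb{F}_2^a$ and $T_a^{(i)}$ be as defined in the context. Then $T_a^{(i)}\cap T_a^{(j)}=\emptyset$ for all $i,j\in S$ with $i\neq j$.
   Context: Elements of $Z_{2^a}=\{0,\dots,2^a-1\}$ are identified with their binary expansions in $\mathbb{F}_2^a$; $\oplus$ is bitwise XOR; for $K\subset Z_{2^a}$, $i\oplus K=\{i\oplus k:k\in K\}$. Let $b=\lfloor\log_2 a\rfloor+1$ (so $2^{b-1}\le a<2^b$) and $m=2^b-a-1$. $T_a$: let $P_a=\{0,2^0,2^1,\dots,2^{a-1}\}$; let $Q_a=\emptyset$ if $a+1$ is a power of 2, and otherwise $Q_a=\{1\oplus 2^{a-m},\dots,1\oplus 2^{a-1}\}$; $T_a=P_a\cup Q_a$, $T_a^{(i)}=i\oplus T_a$. $S$: Let $M_a=\{0<x\le a: x \text{ not a power of } 2\}$, each $x\in M_a$ written $x=\sum_{j=0}^{b-1}x_j2^j$, $x_j\in\{0,1\}$. Define $g(x)=2x$ if $x_{b-1}=0$ and $g(x)=2x+1-2^b$ if $x_{b-1}=1$; let $\tilde M_a=g(M_a)$ and $H_a=\tilde M_a\setminus M_a$. Define $f':\tilde M_a\to M_a$ by $f'(x)=x$ if $x\in M_a\cap\tilde M_a$ and $f'(x)=x+1-2\lceil m/2\rceil$ if $x\in H_a$, and $f=f'\circ g$. Define $h(x)=2^{f(x)-1}+\sum_{j=0}^{b-2}x_j2^{2^{j+1}-1}+x_{b-1}$ for $x\in M_a$, let $M_a'=\{h(x):x\in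 M_a\}\subseteq Z_{2^a}\cong\mathbb{F}_2^a$, and let $S$ be the $\mathbb{F}_2$-linear span of $M_a'$ in $\mathbb{F}_2^a$. *)

theory Defs
  imports Complex_Main
begin

(* Elements of Z_{2^a} are naturals < 2^a; bitwise XOR is the library's xor on nat. *)

definition bB :: "nat \<Rightarrow> nat" where
  "bB a = nat \<lfloor>log 2 (real a)\<rfloor> + 1"

definition mM :: "nat \<Rightarrow> nat" where
  "mM a = 2 ^ bB a - a - 1"

definition P_set :: "nat \<Rightarrow> nat set" where
  "P_set a = {0} \<union> {2 ^ k | k. k < a}"

definition Q_set :: "nat \<Rightarrow> nat set" where
  "Q_set a = (if (\<exists>k. a + 1 = 2 ^ k) then {}
              else {xor 1 (2 ^ k) | k. a - mM a \<le> k \<and> k \<le> a - 1})"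

definition T_set :: "nat \<Rightarrow> nat set" where
  "T_set a = P_set a \<union> Q_set a"

definition T_shift :: "nat \<Rightarrow> nat \<Rightarrow> nat set" where
  "T_shift a i = (\<lambda>t. xor i t) ` T_set a"

definition M_set :: "nat \<Rightarrow> nat set" where
  "M_set a = {x. 0 < x \<and> x \<le> a \<and> \<not> (\<exists>k. x = 2 ^ k)}"

definition g_map :: "nat \<Rightarrow> nat \<Rightarrow> nat" where
  "g_map a x = (if bit x (bB a - 1) then 2 * x + 1 - 2 ^ bB a else 2 * x)"

definition Mt_set :: "nat \<Rightarrow> nat set" where
  "Mt_set a = g_map a ` M_set a"

definition H_set :: "nat \<Rightarrow> nat set" where
  "H_set a = Mt_set a - M_set a"

(* ceil(m/2) = (m+1) div 2 *)
definition f'_map :: "nat \<Rightarrow> nat \<Rightarrow> nat" where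
  "f'_map a y = (if y \<in> M_set a then y else y + 1 - 2 * ((mM a + 1) div 2))"

definition f_map :: "nat \<Rightarrow> nat \<Rightarrow> nat" where
  "f_map a x = f'_map a (g_map a x)"

definition h_map :: "nat \<Rightarrow> nat \<Rightarrow> nat" where
  "h_map a x = 2 ^ (f_map a x - 1)
     + (\<Sum>j<bB a - 1. (if bit x j then 2 ^ (2 ^ (j + 1) - 1) else 0))
     + (if bit x (bB a - 1) then 1 else 0)"

definition M'_set :: "nat \<Rightarrow> nat set" where
  "M'_set a = h_map a ` M_set a"

(* F_2-linear span of a set of bit vectors: closure under XOR containing 0 *)
inductive_set xor_span :: "nat set \<Rightarrow> nat set" for A :: "nat set" where
  zero: "0 \<in> xor_span A"
| step: "x \<in> A \<Longrightarrow> s \<in> xor_span A \<Longrightarrow> xor x s \<in> xor_span A"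

definition S_set :: "nat \<Rightarrow> nat set" where
  "S_set a = xor_span (M'_set a)"

end

theory Submission
  imports Defs
begin

(* View naturals below 2^a as vectors in F_2^a.  Assign to every
   position p < a a "column" c(p) in {1,...,a} (with c(0) = 2^n, where
   2^n <= a < 2^(n+1)), and let syn(s) be the XOR of the columns c(p) over the
   set bits p of s.  This syndrome map is F_2-linear, so if it vanishes on a
   set S and is injective on T, then the translates i XOR T (i in S) are
   pairwise disjoint: a collision i XOR t1 = j XOR t2 gives syn t1 = syn t2. *)


lemma bit_less_exp: "(s::nat) < 2 ^ n \<Longrightarrow> bit s i \<Longrightarrow> i < n"
  by (metis bit_take_bit_iff take_bit_nat_eq_self_iff)

lemma add_eq_xor_if_disjoint:
  fixes x y :: nat
  assumes "\<And>i. bit x i \<Longrightarrow> \<not> bit y i"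
  shows "x + y = xor x y"
  by (rule disjunctive_add_eq_xor) (use assms in \<open>auto simp: bit_eq_iff bit_and_iff\<close>)

lemma add_exp_eq_xor: "(y::nat) < 2 ^ n \<Longrightarrow> 2 ^ n + y = xor (2 ^ n) y"
  by (rule add_eq_xor_if_disjoint) (auto simp: bit_exp_iff dest: bit_less_exp)

lemma bit_top_iff: "(x::nat) < 2 ^ Suc n \<Longrightarrow> bit x n \<longleftrightarrow> 2 ^ n \<le> x"
proof -
  assume "x < 2 ^ Suc n"
  then have "x div 2 ^ n < 2" by (simp add: less_mult_imp_div_less mult.commute)
  then show ?thesis
    by (auto simp: bit_iff_odd less_2_cases_iff div_eq_0_iff)
      (metis One_nat_def div_greater_zero_iff zero_less_one)
qed

lemma take_bit_Suc_xor:
  "take_bit (Suc n) (x::nat) = xor (take_bit n x) (if bit x n then 2 ^ n else 0)"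
  by (rule bit_eqI) (auto simp: bit_take_bit_iff bit_xor_iff bit_exp_iff less_Suc_eq)

lemma odd_not_exp: "odd (y::nat) \<Longrightarrow> 1 < y \<Longrightarrow> \<not> (\<exists>k. y = 2 ^ k)"
  by (metis dvd_power gr0I power_0 less_irrefl)

lemma double_not_exp: "\<not> (\<exists>k. (x::nat) = 2 ^ k) \<Longrightarrow> \<not> (\<exists>k. 2 * x = 2 ^ k)"
  by (metis Suc_pred mult_left_cancel not_gr0 power_0 power_Suc zero_neq_numeral
      even_mult_iff odd_one dvd_refl)


fun syndrome :: "(nat \<Rightarrow> nat) \<Rightarrow> nat \<Rightarrow> nat \<Rightarrow> nat" where
  "syndrome c 0 s = 0"
| "syndrome c (Suc k) s = xor (if bit s k then c k else 0) (syndrome c k s)"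

lemma syndrome_xor: "syndrome c k (xor s t) = xor (syndrome c k s) (syndrome c k t)"
  by (induction k) (auto simp: bit_xor_iff xor.assoc xor.commute xor.left_commute)

lemma syndrome_exp: "syndrome c k (2 ^ q) = (if q < k then c q else 0)"
  by (induction k) (auto simp: bit_exp_iff less_Suc_eq)

lemma syndrome_zero: "syndrome c k 0 = 0"
  by (induction k) auto

lemma linear_vanishes_on_span:
  fixes \<phi> :: "nat \<Rightarrow> nat"
  assumes linear: "\<And>x y. \<phi> (xor x y) = xor (\<phi> x) (\<phi> y)"
    and gen: "\<And>x. x \<in> A \<Longrightarrow> \<phi> x = 0"
    and s: "s \<in> xor_span A"
  shows "\<phi> s = 0"
  using s
proof induction
  case zero
  show ?case using linear[of 0 0] by simp
next
  case (step x s)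
  then show ?case by (simp add: linear gen)
qed

lemma translates_disjoint:
  fixes \<phi> :: "nat \<Rightarrow> nat"
  assumes linear: "\<And>x y. \<phi> (xor x y) = xor (\<phi> x) (\<phi> y)"
    and kernel: "\<And>s. s \<in> S \<Longrightarrow> \<phi> s = 0"
    and inj: "inj_on \<phi> T"
    and i: "i \<in> S" and j: "j \<in> S" and "i \<noteq> j"
  shows "(\<lambda>t. xor i t) ` T \<inter> (\<lambda>t. xor j t) ` T = {}"
proof (rule ccontr)
  assume "(\<lambda>t. xor i t) ` T \<inter> (\<lambda>t. xor j t) ` T \<noteq> {}"
  then obtain t1 t2 where t: "t1 \<in> T" "t2 \<in> T" and eq: "xor i t1 = xor j t2"
    by blast
  have "\<phi> t1 = \<phi> (xor i t1)" and "\<phi> t2 = \<phi> (xor j t2)"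
    using kernel[OF i] kernel[OF j] by (simp_all add: linear)
  with eq have "\<phi> t1 = \<phi> t2" by simp
  with inj t have "t1 = t2" by (auto dest: inj_onD)
  with eq have "i = j" by (metis xor.assoc xor_self_eq xor.right_neutral)
  with \<open>i \<noteq> j\<close> show False ..
qed


(* The part of h(x) encoding the low bits of x: bit j of x is placed at
   position 2^(j+1) - 1. *)
definition spread :: "nat \<Rightarrow> nat \<Rightarrow> nat" where
  "spread x n = (\<Sum>j<n. if bit x j then 2 ^ (2 ^ (j + 1) - 1) else 0)"

lemma spread_less: "spread x n < 2 ^ 2 ^ n"
proof (induction n)
  case 0
  show ?case by (simp add: spread_def)
next
  case (Suc n)
  define q :: nat where "q = 2 ^ Suc n - 1"
  have q: "2 ^ n \<le> q" "Suc q = 2 ^ Suc n"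
    unfolding q_def using one_le_power[of "2::nat" n] by simp_all
  have "spread x (Suc n) \<le> spread x n + 2 ^ q"
    by (simp add: spread_def q_def)
  also have "\<dots> < 2 ^ 2 ^ n + 2 ^ q"
    using Suc.IH by simp
  also have "\<dots> \<le> 2 ^ q + 2 ^ q"
    using q(1) by simp
  also have "\<dots> = 2 ^ Suc q"
    by simp
  finally show ?case unfolding q(2) .
qed

(* The summands of spread occupy distinct bits, so the sum is a XOR. *)
lemma spread_Suc:
  "spread x (Suc n) = xor (spread x n) (if bit x n then 2 ^ (2 ^ Suc n - 1) else 0)"
proof -
  have "2 ^ n \<le> 2 ^ Suc n - (1::nat)"
    using one_le_power[of "2::nat" n] by simp
  then have "spread x n < 2 ^ (2 ^ Suc n - 1)"
    using spread_less[of x n] by (meson order_less_le_trans one_le_numeral power_increasing)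
  then show ?thesis
    by (simp add: spread_def add.commute add_exp_eq_xor xor.commute)
qed

lemma bit_spread: "bit (spread x n) i \<longleftrightarrow> (\<exists>j<n. Suc i = 2 ^ Suc j \<and> bit x j)"
proof (induction n)
  case 0
  show ?case by (simp add: spread_def)
next
  case (Suc n)
  have pos: "i = 2 ^ Suc n - 1 \<longleftrightarrow> Suc i = 2 ^ Suc n"
    using one_le_power[of "2::nat" "Suc n"] by linarith
  have "\<not> bit (spread x n) (2 ^ Suc n - 1)"
    using bit_less_exp[OF spread_less, of x n] one_le_power[of "2::nat" n] by force
  with Suc.IH show ?case
    unfolding spread_Suc bit_xor_iff by (auto simp: bit_exp_iff less_Suc_eq pos simp del: power_Suc)
qed

lemma spread_bit_0: "\<not> bit (spread x n) 0"
  by (simp add: bit_spread)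

lemma syndrome_spread:
  assumes "\<forall>j<n. c (2 ^ Suc j - 1) = 2 ^ j" and "2 ^ n \<le> k"
  shows "syndrome c k (spread x n) = take_bit n x"
  using assms
proof (induction n)
  case 0
  show ?case by (simp add: spread_def syndrome_zero)
next
  case (Suc n)
  have "2 ^ n \<le> k" using Suc.prems(2) by (meson le_trans one_le_numeral power_increasing le_SucI order_refl)
  with Suc have IH: "syndrome c k (spread x n) = take_bit n x" by auto
  have pos: "2 ^ Suc n - 1 < k" using Suc.prems(2) one_le_power[of "2::nat" "Suc n"] by linarith
  have col: "c (2 ^ Suc n - 1) = 2 ^ n" using Suc.prems(1) by auto
  show ?case
    using pos col
    by (simp add: spread_Suc syndrome_xor IH syndrome_exp syndrome_zero take_bit_Suc_xor)
qed


(* The columns for a word length a with A <= a < 2A (A = 2^n in the application):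
   position 0 gets A, odd positions 2i-1 get i, even positions 2i get A + i in
   the low range and i + floor((2A - a)/2) in the top range p > 2(a - A). *)
definition column :: "nat \<Rightarrow> nat \<Rightarrow> nat \<Rightarrow> nat" where
  "column a A p = (if p = 0 then A else if odd p then (p + 1) div 2
     else if p \<le> 2 * (a - A) then A + p div 2 else p div 2 + (2 * A - a) div 2)"

lemma column_range:
  assumes "A \<le> a" "a < 2 * A" "p < a"
  shows "1 \<le> column a A p \<and> column a A p \<le> a"
proof -
  obtain k where "p = 2 * k \<or> p = 2 * k + 1" by (metis evenE oddE)
  then show ?thesis using assms unfolding column_def by auto
qed

lemma column_top:
  assumes "A \<le> a" "a < 2 * A" "p < a" "2 * (a - A) + 1 \<le> p"
  shows "a - A < column a A p \<and> column a A p < A"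
proof -
  obtain k where "p = 2 * k \<or> p = 2 * k + 1" by (metis evenE oddE)
  then show ?thesis using assms unfolding column_def by auto
qed

lemma column_inj:
  assumes "A \<le> a" "a < 2 * A" "p < a" "q < a" "column a A p = column a A q"
  shows "p = q"
proof -
  obtain k where "p = 2 * k \<or> p = 2 * k + 1" by (metis evenE oddE)
  moreover obtain l where "q = 2 * l \<or> q = 2 * l + 1" by (metis evenE oddE)
  ultimately show ?thesis using assms unfolding column_def by (auto split: if_splits)
qed

lemma column_odd: "odd p \<Longrightarrow> column a A p = (p + 1) div 2"
  by (auto simp: column_def)

lemma column_exp: "column a A (2 ^ Suc j - 1) = 2 ^ j"
proof -
  have "0 < (2::nat) ^ Suc j" by (rule zero_less_power) simp
  then show ?thesis by (simp add: column_odd)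
qed


lemma bB_bounds:
  assumes "a \<ge> 1"
  obtains n where "bB a = Suc n" "2 ^ n \<le> a" "a < 2 * 2 ^ n"
proof -
  obtain n where n: "2 ^ n \<le> a" "a < 2 ^ (n + 1)" using ex_power_ivl1[of 2 a] assms by auto
  then have "\<lfloor>log (real 2) (real a)\<rfloor> = int n" by (intro floor_log_nat_eq_if) auto
  then have "bB a = Suc n" unfolding bB_def by simp
  then show ?thesis using that n by simp
qed

(* g doubles x modulo 2^b - 1, i.e. it rotates the b-bit expansion of x. *)
lemma g_map_eq:
  assumes bb: "bB a = Suc n" and "x < 2 * 2 ^ n"
  shows "g_map a x = (if 2 ^ n \<le> x then 2 * x + 1 - 2 * 2 ^ n else 2 * x)"
proof -
  have "bit x n \<longleftrightarrow> 2 ^ n \<le> x" by (rule bit_top_iff) (use assms(2) in simp)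
  then show ?thesis unfolding g_map_def bb by simp
qed

(* The leading term 2^(f(x) - 1) of h(x) sits at a position p whose column is x;
   p + 1 is not a power of 2. *)
lemma f_map_column:
  assumes bb: "bB a = Suc n" and A: "2 ^ n \<le> a" "a < 2 * 2 ^ n" and xM: "x \<in> M_set a"
  obtains p where "f_map a x = Suc p" "0 < p" "p < a" "\<not> (\<exists>k. Suc p = 2 ^ k)"
    "column a (2 ^ n) p = x"
proof -
  define A :: nat where "A = 2 ^ n"
  have A1: "A \<le> a" "a < 2 * A" using A unfolding A_def by auto
  have x: "0 < x" "x \<le> a" "\<not> (\<exists>k. x = 2 ^ k)" using xM unfolding M_set_def by auto
  have g: "g_map a x = (if A \<le> x then 2 * x + 1 - 2 * A else 2 * x)"
  proof -
    have "x < 2 * 2 ^ n" using x(2) A(2) by simp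
    then show ?thesis unfolding A_def by (rule g_map_eq[OF bb])
  qed
  have inverse: "\<exists>p. f_map a x = Suc p \<and> 0 < p \<and> p < a \<and> \<not> (\<exists>k. Suc p = 2 ^ k) \<and> column a A p = x"
  proof (cases "A \<le> x")
    case True \<comment> \<open>top bit of x set: g x is odd, hence in M_a\<close>
    with x(3) have xA: "A < x" unfolding A_def by (metis le_neq_implies_less)
    define p where "p = 2 * (x - A)"
    have np: "\<not> (\<exists>k. Suc p = 2 ^ k)" using odd_not_exp[of "Suc p"] xA unfolding p_def by auto
    have gx: "g_map a x = Suc p" using g xA unfolding p_def by simp
    then have "Suc p \<in> M_set a" unfolding M_set_def using np xA x A1 unfolding p_def by auto
    then have "f_map a x = Suc p" unfolding f_map_def f'_map_def gx by simp
    moreover have "column a A p = x" unfolding column_def p_def using xA x A1 by auto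
    ultimately show ?thesis using np xA x A1 unfolding p_def by auto
  next
    case False
    then have gx: "g_map a x = 2 * x" using g by simp
    show ?thesis
    proof (cases "2 * x \<le> a")
      case True
      have np: "\<not> (\<exists>k. 2 * x = 2 ^ k)" using double_not_exp x(3) by blast
      then have "2 * x \<in> M_set a" unfolding M_set_def using True x by auto
      then have "f_map a x = Suc (2 * x - 1)" unfolding f_map_def f'_map_def gx using x by simp
      moreover have "column a A (2 * x - 1) = x" unfolding column_def using x by auto
      ultimately show ?thesis using np x True by (intro exI[of _ "2 * x - 1"]) auto
    next
      case top: False \<comment> \<open>g x = 2x lies in H_a and is shifted down by f'\<close>
      define h where "h = (2 * A - a) div 2"
      have h: "2 * h \<le> 2 * A - a" "2 * A - a \<le> 2 * h + 1" unfolding h_def by auto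
      have mM: "Suc (mM a) = 2 * A - a" using A1 by (simp add: mM_def bb A_def)
      have "2 * x \<notin> M_set a" unfolding M_set_def using top by auto
      then have f: "f_map a x = 2 * x + 1 - 2 * h" by (simp add: f_map_def f'_map_def gx mM h_def)
      define p where "p = 2 * x - 2 * h"
      have pp: "f_map a x = Suc p" "2 * (a - A) + 1 \<le> p" "p < a" "even p"
        unfolding f p_def using h A1 top False by auto
      have "\<not> (\<exists>k. Suc p = 2 ^ k)" using odd_not_exp[of "Suc p"] pp by auto
      moreover have "column a A p = x" unfolding column_def h_def[symmetric]
        using pp h A1 top False unfolding p_def by auto
      ultimately show ?thesis using pp by auto
    qed
  qed
  from inverse show ?thesis using that unfolding A_def by blast
qed

lemma syndrome_h_map:
  assumes bb: "bB a = Suc n" and A: "2 ^ n \<le> a" "a < 2 * 2 ^ n" and xM: "x \<in> M_set a"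
  shows "syndrome (column a (2 ^ n)) a (h_map a x) = 0"
proof -
  define c where "c = column a (2 ^ n)"
  obtain p where p: "f_map a x = Suc p" "0 < p" "p < a" "\<not> (\<exists>k. Suc p = 2 ^ k)" "c p = x"
    using f_map_column[OF assms] unfolding c_def by blast
  have x: "x < 2 ^ Suc n" using xM A unfolding M_set_def by auto
  define e :: nat where "e = (if bit x n then 1 else 0)"
  have "h_map a x = 2 ^ p + (spread x n + e)"
    unfolding h_map_def bb spread_def e_def using p(1) by simp
  also have "spread x n + e = xor (spread x n) e"
  proof (rule add_eq_xor_if_disjoint)
    show "\<not> bit e i" if "bit (spread x n) i" for i
      using that spread_bit_0[of x n] by (cases "i = 0") (auto simp: e_def bit_Suc_0_iff)
  qed
  also have "2 ^ p + xor (spread x n) e = xor (2 ^ p) (xor (spread x n) e)"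
  proof (rule add_eq_xor_if_disjoint)
    fix i assume "bit (2 ^ p :: nat) i"
    then have "i = p" by (simp add: bit_exp_iff)
    moreover have "\<not> bit (spread x n) p" using p(4) unfolding bit_spread by blast
    moreover have "\<not> bit e p" using p(2) by (simp add: e_def bit_Suc_0_iff)
    ultimately show "\<not> bit (xor (spread x n) e) i" by (simp add: bit_xor_iff)
  qed
  finally have hx: "h_map a x = xor (2 ^ p) (xor (spread x n) e)" .
  have "\<forall>j<n. c (2 ^ Suc j - 1) = 2 ^ j" unfolding c_def using column_exp by blast
  then have spr: "syndrome c a (spread x n) = take_bit n x"
    by (rule syndrome_spread[OF _ A(1)])
  have "c 0 = 2 ^ n" by (simp add: c_def column_def)
  then have syn_e: "syndrome c a e = (if bit x n then 2 ^ n else 0)"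
    using syndrome_exp[of c a 0] p(2,3) by (simp add: e_def syndrome_zero)
  have "syndrome c a (h_map a x) = xor (c p) (xor (take_bit n x) (if bit x n then 2 ^ n else 0))"
    by (simp add: hx syndrome_xor syndrome_exp spr syn_e p(3))
  also have "\<dots> = xor x (take_bit (Suc n) x)"
    by (simp only: p(5) take_bit_Suc_xor)
  also have "take_bit (Suc n) x = x"
    using x by (simp add: take_bit_nat_eq_self_iff)
  finally show ?thesis unfolding c_def by simp
qed

lemma syndrome_S_set:
  assumes "bB a = Suc n" and "2 ^ n \<le> a" "a < 2 * 2 ^ n" and "s \<in> S_set a"
  shows "syndrome (column a (2 ^ n)) a s = 0"
proof -
  have "syndrome (column a (2 ^ n)) a y = 0" if "y \<in> M'_set a" for y
    using that unfolding M'_set_def by (auto simp: syndrome_h_map[OF assms(1-3)])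
  then show ?thesis
    using linear_vanishes_on_span[of "syndrome (column a (2 ^ n)) a"] syndrome_xor assms(4)
    unfolding S_set_def by blast
qed


lemma T_set_cases:
  assumes bb: "bB a = Suc n" and A: "2 ^ n \<le> a" "a < 2 * 2 ^ n" and t: "t \<in> T_set a"
  obtains "t = 0"
    | k where "k < a" "t = 2 ^ k"
    | k where "2 * (a - 2 ^ n) + 1 \<le> k" "k < a" "t = xor 1 (2 ^ k)"
proof -
  have "a - mM a = 2 * (a - 2 ^ n) + 1" using A by (simp add: mM_def bb)
  moreover have "a \<ge> 1" using A by (metis le_trans one_le_numeral one_le_power)
  ultimately show ?thesis using t that unfolding T_set_def P_set_def Q_set_def
    by (auto split: if_splits)
qed

(* The syndrome separates T_a: 0 goes to 0, a unit vector 2^k to its column c(k)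
   in [1, a], and an element 1 XOR 2^k of Q_a to 2^n + c(k) > a.  Since the
   columns are injective, the syndrome can be decoded back to t. *)
lemma syndrome_inj_on_T:
  assumes bb: "bB a = Suc n" and A: "2 ^ n \<le> a" "a < 2 * 2 ^ n"
  shows "inj_on (syndrome (column a (2 ^ n)) a) (T_set a)"
proof -
  define c where "c = column a (2 ^ n)"
  define pos where "pos v = the_inv_into {..<a} c v" for v
  define decode :: "nat \<Rightarrow> nat" where "decode v =
    (if v = 0 then 0 else if v \<le> a then 2 ^ pos v else xor 1 (2 ^ pos (v - 2 ^ n)))" for v
  have "0 < a" using A by (metis le_trans not_less zero_less_power pos2 le_refl)
  have "inj_on c {..<a}"
    by (rule inj_onI) (use column_inj[OF A] in \<open>auto simp: c_def\<close>)
  then have pos: "pos (c k) = k" if "k < a" for k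
    using that by (simp add: pos_def the_inv_into_f_f)
  have "decode (syndrome c a t) = t" if "t \<in> T_set a" for t
    using that
  proof (rule T_set_cases[OF bb A])
    assume "t = 0"
    then show ?thesis by (simp add: decode_def syndrome_zero)
  next
    fix k assume k: "k < a" "t = 2 ^ k"
    then show ?thesis
      using column_range[OF A k(1)] pos[OF k(1)] by (simp add: c_def decode_def syndrome_exp)
  next
    fix k assume k: "2 * (a - 2 ^ n) + 1 \<le> k" "k < a" "t = xor 1 (2 ^ k)"
    have top: "a - 2 ^ n < c k" "c k < 2 ^ n" using column_top[OF A k(2,1)] unfolding c_def by auto
    have "syndrome c a t = xor (2 ^ n) (c k)"
      using k \<open>0 < a\<close> syndrome_exp[of c a 0] syndrome_exp[of c a k]
      unfolding c_def column_def by (simp add: syndrome_xor)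
    also have "\<dots> = 2 ^ n + c k" using add_exp_eq_xor[OF top(2)] by simp
    moreover have "a < 2 ^ n + c k" using top(1) A by linarith
    ultimately show ?thesis using k pos[OF k(2)] by (simp add: decode_def)
  qed
  then show ?thesis unfolding c_def by (rule inj_on_inverseI)
qed


theorem mainTheorem3:
  fixes a i j :: nat
  assumes "a \<ge> 1" and "i \<in> S_set a" and "j \<in> S_set a" and "i \<noteq> j"
  shows "T_shift a i \<inter> T_shift a j = {}"
proof -
  obtain n where bb: "bB a = Suc n" and A: "2 ^ n \<le> a" "a < 2 * 2 ^ n"
    using bB_bounds[OF assms(1)] .
  show ?thesis
    unfolding T_shift_def
    using translates_disjoint[OF syndrome_xor syndrome_S_set[OF bb A] syndrome_inj_on_T[OF bb A]]
      assms(2-4) by blast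
qed

end
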